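(* Let $X$ be a topological space (no separation axioms assumed) that is both locally $\mathfrak{c}$ and $\mathfrak{c}$-fair, and let $\kappa\le\mathfrak{c}$ be a regular cardinal such that for every strongly increasing $\kappa$-sequence $\{F_\alpha:\alpha<\kappa\}$ of closed subsets of $X$ the union $\bigcup_{\alpha<\kappa}F_\alpha$ is closed in $X$. If $|X|>\mathfrak{c}$, then for every subset $A\subseteq X$ with $|A|\le\mathfrak{c}$ there exists a clopen subset $U$ of $X$ with $A\subseteq U$, $|U|=\mathfrak{c}$ and $L(U)\ge\kappa$.
   Context: A space $X$ is locally $\mathfrak{c}$ if every point has a neighbourhood of cardinality $\le\mathfrak{c}$. $X$ is $\mathfrak{c}$-fair if the closure of every subset of $X$ of cardinality $\mathfrak{c}$ also has cardinality $\mathfrak{c}$. A $\kappa$-sequence $\{F_\alpha:\alpha<\kappa\}$ of subsets of $X$ is strongly increasing if $F_\alpha\subseteq \operatorname{int}F_{\alpha+1}$ for all $\alpha<\kappa$. $L(U)$ denotes the Lindelöf number of $U$ (the least infinite cardinal $\lambda$ such that every open cover of $U$ has a subcover of size $\le\lambda$). *)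

theory Defs
  imports "HOL-Analysis.Analysis" "HOL-Library.Equipollence"
begin

text \<open>Cardinals are represented as in HOL's BNF cardinal library: a cardinal is a
  well-order relation kappa on some type with Card_order kappa; ordinals below kappa
  are the elements of Field kappa, and the successor alpha+1 of alpha is
  wo_rel.suc kappa {alpha}.  The continuum c is the cardinality of the reals.\<close>

definition locally_c :: "'a topology \<Rightarrow> bool" where
  "locally_c X \<longleftrightarrow> (\<forall>x \<in> topspace X. \<exists>N V. openin X V \<and> x \<in> V \<and> V \<subseteq> N \<and>
      N \<subseteq> topspace X \<and> N \<lesssim> (UNIV :: real set))"

definition c_fair :: "'a topology \<Rightarrow> bool" where
  "c_fair X \<longleftrightarrow> (\<forall>A. A \<subseteq> topspace X \<and> A \<approx> (UNIV :: real set)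
      \<longrightarrow> X closure_of A \<approx> (UNIV :: real set))"

definition strongly_increasing ::
    "'a topology \<Rightarrow> 'k rel \<Rightarrow> ('k \<Rightarrow> 'a set) \<Rightarrow> bool" where
  "strongly_increasing X \<kappa> F \<longleftrightarrow>
     (\<forall>\<alpha> \<in> Field \<kappa>. F \<alpha> \<subseteq> X interior_of (F (wo_rel.suc \<kappa> {\<alpha>})))"

definition covers_bounded_by :: "'a topology \<Rightarrow> 'a set \<Rightarrow> 'b set \<Rightarrow> bool" where
  "covers_bounded_by X U S \<longleftrightarrow>
     (\<forall>\<C>. (\<forall>C \<in> \<C>. openin X C) \<and> U \<subseteq> \<Union>\<C> \<longrightarrow>
        (\<exists>\<D> \<subseteq> \<C>. \<D> \<lesssim> S \<and> U \<subseteq> \<Union>\<D>))"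

text \<open>L(U) >= kappa: since L(U) is the least infinite cardinal lambda such that every
  open cover of U has a subcover of size <= lambda, L(U) >= kappa means that no
  infinite cardinal lambda < kappa has this property.  Cardinals below kappa are
  exactly the cardinalities of subsets of Field kappa of cardinality < kappa.\<close>
definition lindelof_number_ge :: "'a topology \<Rightarrow> 'a set \<Rightarrow> 'k rel \<Rightarrow> bool" where
  "lindelof_number_ge X U \<kappa> \<longleftrightarrow>
     (\<forall>S. S \<subseteq> Field \<kappa> \<and> infinite S \<and> (card_of S, \<kappa>) \<in> ordLess \<longrightarrow> \<not> covers_bounded_by X U S)"

end

theory Submission
  imports Defs
begin

text \<open>Build a chain of closed sets \<open>F \<alpha>\<close>, \<open>\<alpha> < \<kappa>\<close>, of size \<open>\<cc>\<close> whose interiors contain \<open>A\<close>,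
  a fixed set of size \<open>\<cc>\<close> and all earlier stages (local \<open>\<cc>\<close>-ness and \<open>\<cc>\<close>-fairness give
  a closed set of size \<open>\<cc>\<close> around every set of size \<open>\<le> \<cc>\<close> in its interior), and such that
  each stage has a point outside the earlier ones, which exists because \<open>|X| > \<cc>\<close>.  The union
  \<open>U\<close> is closed by hypothesis, open since each stage lies in the interior of the next, and of
  size \<open>\<cc>\<close> as \<open>\<kappa> \<le> \<cc>\<close>.  The interiors of the stages cover \<open>U\<close>; by regularity a
  subcover of size \<open>< \<kappa>\<close> is bounded, so \<open>U\<close> would lie in one stage, but the chain never
  stabilises.\<close>

unbundle cardinal_syntax

lemma lepoll_iff_card_of_ordLeq: "A \<lesssim> B \<longleftrightarrow> |A| \<le>o |B|"
  by (simp add: lepoll_def card_of_ordLeq[symmetric])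

lemma card_of_Un_ordLeq_infinite:
  "infinite C \<Longrightarrow> |A| \<le>o |C| \<Longrightarrow> |B| \<le>o |C| \<Longrightarrow> |A \<union> B| \<le>o |C|"
  using card_of_Un_ordLeq_infinite_Field[of "|C|" A B] card_of_Card_order[of C]
  by (simp add: Field_card_of)

lemma Cinfinite_suc_singleton:
  assumes "Card_order \<kappa>" "Cinfinite \<kappa>" "\<alpha> \<in> Field \<kappa>"
  shows "wo_rel.suc \<kappa> {\<alpha>} \<in> Field \<kappa>" "\<alpha> \<in> underS \<kappa> (wo_rel.suc \<kappa> {\<alpha>})"
proof -
  have wo: "wo_rel \<kappa>" using assms(1) by (rule Card_order_wo_rel)
  obtain y where "y \<in> Field \<kappa>" "\<alpha> \<noteq> y" "(\<alpha>, y) \<in> \<kappa>"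
    using Cinfinite_limit[OF assms(3,2)] by blast
  then have above: "AboveS \<kappa> {\<alpha>} \<noteq> {}" unfolding AboveS_def by blast
  have "{\<alpha>} \<subseteq> Field \<kappa>" using assms(3) by blast
  then show "wo_rel.suc \<kappa> {\<alpha>} \<in> Field \<kappa>" "\<alpha> \<in> underS \<kappa> (wo_rel.suc \<kappa> {\<alpha>})"
    using wo_rel.suc_inField[OF wo _ above] wo_rel.suc_greater[OF wo _ above] underS_I
    by (metis singletonI)+
qed

lemma Union_interiors_strongly_increasing:
  assumes "Card_order \<kappa>" "Cinfinite \<kappa>" "strongly_increasing X \<kappa> F"
  shows "(\<Union>\<alpha> \<in> Field \<kappa>. X interior_of F \<alpha>) = (\<Union>\<alpha> \<in> Field \<kappa>. F \<alpha>)"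
proof
  show "(\<Union>\<alpha> \<in> Field \<kappa>. F \<alpha>) \<subseteq> (\<Union>\<alpha> \<in> Field \<kappa>. X interior_of F \<alpha>)"
    using assms(3) Cinfinite_suc_singleton(1)[OF assms(1,2)]
    unfolding strongly_increasing_def by blast
  show "(\<Union>\<alpha> \<in> Field \<kappa>. X interior_of F \<alpha>) \<subseteq> (\<Union>\<alpha> \<in> Field \<kappa>. F \<alpha>)"
    by (rule UN_mono) (simp_all add: interior_of_subset)
qed

lemma openin_Union_strongly_increasing:
  assumes "Card_order \<kappa>" "Cinfinite \<kappa>" "strongly_increasing X \<kappa> F"
  shows "openin X (\<Union>\<alpha> \<in> Field \<kappa>. F \<alpha>)"
proof -
  have "openin X (\<Union>\<alpha> \<in> Field \<kappa>. X interior_of F \<alpha>)" by auto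
  then show ?thesis by (simp only: Union_interiors_strongly_increasing[OF assms])
qed

definition interior_chain :: "'a topology \<Rightarrow> 'k rel \<Rightarrow> ('k \<Rightarrow> 'a set) \<Rightarrow> bool" where
  "interior_chain X \<kappa> F \<longleftrightarrow>
     (\<forall>\<alpha> \<beta>. \<beta> \<in> underS \<kappa> \<alpha> \<longrightarrow> F \<beta> \<subseteq> X interior_of F \<alpha> \<and> \<not> F \<alpha> \<subseteq> F \<beta>)"

lemma interior_chainD:
  assumes "interior_chain X \<kappa> F" "\<beta> \<in> underS \<kappa> \<alpha>"
  shows "F \<beta> \<subseteq> X interior_of F \<alpha>" "\<not> F \<alpha> \<subseteq> F \<beta>"
  using assms unfolding interior_chain_def by meson+

lemma interior_chain_strongly_increasing:
  assumes "Card_order \<kappa>" "Cinfinite \<kappa>" "interior_chain X \<kappa> F"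
  shows "strongly_increasing X \<kappa> F"
  using interior_chainD(1)[OF assms(3) Cinfinite_suc_singleton(2)[OF assms(1,2)]]
  unfolding strongly_increasing_def by blast

lemma interior_chain_mono:
  assumes "interior_chain X \<kappa> F" "(\<beta>, \<alpha>) \<in> \<kappa>"
  shows "F \<beta> \<subseteq> F \<alpha>"
proof (cases "\<beta> = \<alpha>")
  case False
  then have "\<beta> \<in> underS \<kappa> \<alpha>" using assms(2) by (simp add: underS_I)
  then have "F \<beta> \<subseteq> X interior_of F \<alpha>" by (rule interior_chainD(1)[OF assms(1)])
  then show ?thesis by (meson interior_of_subset order_trans)
qed simp

lemma not_covers_bounded_by_Union_interior_chain:
  fixes X :: "'a topology" and \<kappa> :: "'k rel" and F :: "'k \<Rightarrow> 'a set" and S :: "'b set"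
  assumes "Card_order \<kappa>" "Cinfinite \<kappa>" "regularCard \<kappa>" "interior_chain X \<kappa> F" "|S| <o \<kappa>"
  shows "\<not> covers_bounded_by X (\<Union>\<alpha> \<in> Field \<kappa>. F \<alpha>) S"
proof
  let ?U = "\<Union>\<alpha> \<in> Field \<kappa>. F \<alpha>"
  let ?C = "(\<lambda>\<alpha>. X interior_of F \<alpha>) ` Field \<kappa>"
  assume "covers_bounded_by X ?U S"
  then have subcover: "\<exists>\<D> \<subseteq> \<C>. \<D> \<lesssim> S \<and> ?U \<subseteq> \<Union>\<D>"
    if "\<forall>C \<in> \<C>. openin X C" "?U \<subseteq> \<Union>\<C>" for \<C>
    using that unfolding covers_bounded_by_def by blast
  have cover: "?U \<subseteq> \<Union>?C"
    using Union_interiors_strongly_increasing[OF assms(1,2) interior_chain_strongly_increasing[OF assms(1,2,4)]]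
    by simp
  have "\<forall>C \<in> ?C. openin X C" by auto
  then obtain \<D> where \<D>: "\<D> \<subseteq> ?C" "\<D> \<lesssim> S" "?U \<subseteq> \<Union>\<D>"
    using subcover[OF _ cover] by blast
  then obtain I where I: "I \<subseteq> Field \<kappa>" "inj_on (\<lambda>\<alpha>. X interior_of F \<alpha>) I"
    "\<D> = (\<lambda>\<alpha>. X interior_of F \<alpha>) ` I"
    unfolding subset_image_inj by blast
  have "|I| \<le>o |\<D>|" unfolding card_of_ordLeq[symmetric] using I(2,3) by blast
  also have "|\<D>| \<le>o |S|" using \<D>(2) unfolding lepoll_iff_card_of_ordLeq .
  finally have "|I| \<le>o |S|" .
  then have "|I| <o \<kappa>" using assms(5) by (rule ordLeq_ordLess_trans)
  then have "\<not> cofinal I \<kappa>"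
    using assms(3) I(1) not_ordLess_ordIso unfolding regularCard_def by metis
  then obtain a where a: "a \<in> Field \<kappa>" "\<forall>b\<in>I. \<not> (a \<noteq> b \<and> (a, b) \<in> \<kappa>)"
    unfolding cofinal_def by blast
  have "X interior_of F b \<subseteq> F a" if "b \<in> I" for b
  proof -
    have "(b, a) \<in> \<kappa>"
      using wo_rel.TOTALS[OF Card_order_wo_rel[OF assms(1)]] a that I(1) by (metis subsetD)
    then show ?thesis by (meson interior_chain_mono[OF assms(4)] interior_of_subset order_trans)
  qed
  then have "?U \<subseteq> F a" using \<D>(3) unfolding I(3) by (meson UN_least order_trans)
  obtain s where "s \<in> Field \<kappa>" "a \<in> underS \<kappa> s"
    using Cinfinite_suc_singleton[OF assms(1,2) a(1)] by blast
  have "F s \<subseteq> F a" using UN_upper[OF \<open>s \<in> Field \<kappa>\<close>] \<open>?U \<subseteq> F a\<close> by (rule order_trans)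
  with interior_chainD(2)[OF assms(4) \<open>a \<in> underS \<kappa> s\<close>] show False by contradiction
qed

lemma lindelof_number_ge_Union_interior_chain:
  assumes "Card_order \<kappa>" "Cinfinite \<kappa>" "regularCard \<kappa>" "interior_chain X \<kappa> F"
  shows "lindelof_number_ge X (\<Union>\<alpha> \<in> Field \<kappa>. F \<alpha>) \<kappa>"
  using not_covers_bounded_by_Union_interior_chain[OF assms] unfolding lindelof_number_ge_def by blast

lemma some_point_outside_small_set:
  assumes "\<not> |topspace X| \<le>o |M|" "|B| \<le>o |M|"
  shows "(SOME p. p \<in> topspace X - B) \<in> topspace X - B"
proof -
  have "\<not> topspace X \<subseteq> B"
  proof
    assume "topspace X \<subseteq> B"
    then have "|topspace X| \<le>o |M|" by (rule ordLeq_transitive[OF card_of_mono1 assms(2)])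
    with assms(1) show False by contradiction
  qed
  then obtain p where "p \<in> topspace X - B" unfolding subset_iff by blast
  then show ?thesis by (rule someI)
qed

lemma exists_closed_interior_chain:
  fixes \<kappa> :: "'k rel" and M :: "'b set"
  assumes "wo_rel \<kappa>" "|Field \<kappa>| \<le>o |M|" "infinite M"
    and H: "\<And>B. B \<subseteq> topspace X \<Longrightarrow> |B| \<le>o |M| \<Longrightarrow>
              closedin X (H B) \<and> B \<subseteq> X interior_of H B \<and> |H B| \<le>o |M|"
    and "\<not> |topspace X| \<le>o |M|" "A \<subseteq> topspace X" "|A| \<le>o |M|"
  obtains F where "interior_chain X \<kappa> F"
    "\<And>\<alpha>. closedin X (F \<alpha>)" "\<And>\<alpha>. |F \<alpha>| \<le>o |M|" "\<And>\<alpha>. A \<subseteq> F \<alpha>"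
proof -
  define low where "low g \<alpha> = (\<Union>\<beta> \<in> underS \<kappa> \<alpha>. g \<beta>)" for g :: "'k \<Rightarrow> 'a set" and \<alpha>
  define new where "new B = (SOME p. p \<in> topspace X - B)" for B
  define F where "F = wo_rel.worec \<kappa> (\<lambda>g \<alpha>. H (A \<union> low g \<alpha> \<union> {new (low g \<alpha>)}))"
  have "wo_rel.adm_wo \<kappa> (\<lambda>g \<alpha>. H (A \<union> low g \<alpha> \<union> {new (low g \<alpha>)}))"
    unfolding wo_rel.adm_wo_def[OF assms(1)] low_def by (metis (no_types, lifting) SUP_cong)
  then have F_eq: "F \<alpha> = H (A \<union> low F \<alpha> \<union> {new (low F \<alpha>)})" for \<alpha>
    unfolding F_def by (subst wo_rel.worec_fixpoint[OF assms(1)]) auto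
  have stage: "closedin X (F \<alpha>) \<and> |F \<alpha>| \<le>o |M| \<and>
      A \<union> low F \<alpha> \<union> {new (low F \<alpha>)} \<subseteq> X interior_of F \<alpha> \<and> new (low F \<alpha>) \<notin> low F \<alpha>" for \<alpha>
  proof (induction \<alpha> rule: wo_rel.well_order_induct[OF assms(1)])
    case (1 \<alpha>)
    then have earlier: "closedin X (F \<beta>) \<and> |F \<beta>| \<le>o |M|" if "\<beta> \<in> underS \<kappa> \<alpha>" for \<beta>
      using that underS_E by metis
    have "underS \<kappa> \<alpha> \<subseteq> Field \<kappa>" unfolding underS_def Field_def by blast
    then have low_small: "|low F \<alpha>| \<le>o |M|" unfolding low_def
      by (rule card_of_UNION_ordLeq_infinite[OF assms(3) ordLeq_transitive[OF card_of_mono1 assms(2)]])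
        (use earlier in blast)
    have new: "new (low F \<alpha>) \<in> topspace X - low F \<alpha>"
      unfolding new_def using assms(5) low_small by (rule some_point_outside_small_set)
    let ?S = "A \<union> low F \<alpha> \<union> {new (low F \<alpha>)}"
    have "low F \<alpha> \<subseteq> topspace X"
      unfolding low_def by (rule UN_least) (use earlier closedin_subset in blast)
    then have "?S \<subseteq> topspace X" using assms(6) new by blast
    moreover have "|?S| \<le>o |M|"
      using card_of_Un_ordLeq_infinite[OF assms(3) card_of_Un_ordLeq_infinite[OF assms(3) assms(7) low_small]
          card_of_singl_ordLeq] assms(3) by force
    ultimately have "closedin X (H ?S) \<and> ?S \<subseteq> X interior_of H ?S \<and> |H ?S| \<le>o |M|"
      by (rule H)
    then show ?case using new unfolding F_eq[of \<alpha>, symmetric] by blast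
  qed
  have "interior_chain X \<kappa> F"
    unfolding interior_chain_def
  proof (intro allI impI conjI)
    fix \<alpha> \<beta> assume "\<beta> \<in> underS \<kappa> \<alpha>"
    then have "F \<beta> \<subseteq> low F \<alpha>" unfolding low_def by (rule UN_upper)
    moreover have "low F \<alpha> \<subseteq> X interior_of F \<alpha>" "new (low F \<alpha>) \<in> F \<alpha> - low F \<alpha>"
      using stage[of \<alpha>] interior_of_subset[of X "F \<alpha>"] by auto
    ultimately show "F \<beta> \<subseteq> X interior_of F \<alpha>" "\<not> F \<alpha> \<subseteq> F \<beta>" by auto
  qed
  moreover have "A \<subseteq> F \<alpha>" for \<alpha>
    using stage[of \<alpha>] interior_of_subset[of X "F \<alpha>"] by auto
  ultimately show thesis using that stage by blast
qed

lemma card_of_ordLeq_obtain_subset: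
  assumes "|A| \<le>o |B|"
  obtains C where "C \<subseteq> B" "|C| =o |A|"
proof -
  obtain f where "inj_on f A" "f ` A \<subseteq> B" using assms unfolding card_of_ordLeq[symmetric] by blast
  have "|f ` A| =o |A|"
    using inj_on_image_eqpoll_self[OF \<open>inj_on f A\<close>] unfolding eqpoll_iff_card_of_ordIso .
  with \<open>f ` A \<subseteq> B\<close> show thesis by (rule that)
qed

lemma exists_closed_small_neighbourhood:
  assumes "locally_c X" "c_fair X" "|UNIV :: real set| \<le>o |topspace X|"
    and "B \<subseteq> topspace X" "|B| \<le>o |UNIV :: real set|"
  shows "\<exists>C. closedin X C \<and> B \<subseteq> X interior_of C \<and> |C| \<le>o |UNIV :: real set|"
proof -
  let ?R = "UNIV :: real set"
  have "\<forall>x \<in> B. \<exists>V. openin X V \<and> x \<in> V \<and> |V| \<le>o |?R|"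
  proof
    fix x assume "x \<in> B"
    with assms(4) have "x \<in> topspace X" by (rule subsetD)
    then obtain N V where NV: "openin X V" "x \<in> V" "V \<subseteq> N" "N \<lesssim> ?R"
      using assms(1) unfolding locally_c_def by meson
    have "|V| \<le>o |?R|"
      using ordLeq_transitive[OF card_of_mono1[OF NV(3)] NV(4)[unfolded lepoll_iff_card_of_ordLeq]] .
    with NV(1,2) show "\<exists>V. openin X V \<and> x \<in> V \<and> |V| \<le>o |?R|" by blast
  qed
  then obtain V where V: "\<forall>x \<in> B. openin X (V x) \<and> x \<in> V x \<and> |V x| \<le>o |?R|"
    by metis
  define W where "W = (\<Union>x \<in> B. V x)"
  have W_open: "openin X W" unfolding W_def using V by auto
  have W_small: "|W| \<le>o |?R|" unfolding W_def
    by (rule card_of_UNION_ordLeq_infinite[OF infinite_UNIV_char_0 assms(5)]) (use V in blast)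
  text \<open>\<open>\<cc>\<close>-fairness only bounds closures of sets of size exactly \<open>\<cc>\<close>, so \<open>W\<close> is padded
    to such a set \<open>W \<union> D\<close> before taking the closure.\<close>
  obtain D where D: "D \<subseteq> topspace X" "|D| =o |?R|"
    using assms(3) by (rule card_of_ordLeq_obtain_subset)
  have "|W \<union> D| \<le>o |?R|"
    using card_of_Un_ordLeq_infinite[OF infinite_UNIV_char_0 W_small] D(2) ordIso_iff_ordLeq by blast
  moreover have "|?R| \<le>o |W \<union> D|"
    using ordLeq_transitive[OF _ card_of_mono1[of D "W \<union> D"]] D(2) ordIso_iff_ordLeq by blast
  moreover have "W \<union> D \<subseteq> topspace X" using W_open openin_subset D(1) by blast
  ultimately have "X closure_of (W \<union> D) \<approx> ?R"
    using assms(2) unfolding c_fair_def eqpoll_iff_card_of_ordIso ordIso_iff_ordLeq by blast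
  then have "|X closure_of (W \<union> D)| \<le>o |?R|"
    unfolding eqpoll_iff_card_of_ordIso ordIso_iff_ordLeq by blast
  then have "|X closure_of W| \<le>o |?R|"
    by (rule ordLeq_transitive[OF card_of_mono1[OF closure_of_mono[OF Un_upper1]]])
  moreover have "B \<subseteq> X interior_of (X closure_of W)"
  proof -
    have "B \<subseteq> W" unfolding W_def using V by blast
    also have "W \<subseteq> X interior_of (X closure_of W)"
      using interior_of_maximal[OF closure_of_subset[OF openin_subset[OF W_open]] W_open] .
    finally show ?thesis .
  qed
  ultimately show ?thesis using closedin_closure_of by blast
qed

lemma exists_closed_interior_chain_card_of_continuum:
  fixes \<kappa> :: "'k rel"
  assumes "locally_c X" "c_fair X" "\<not> |topspace X| \<le>o |UNIV :: real set|"
    and "wo_rel \<kappa>" "|Field \<kappa>| \<le>o |UNIV :: real set|"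
    and "A \<subseteq> topspace X" "|A| \<le>o |UNIV :: real set|"
  obtains F where "interior_chain X \<kappa> F"
    "\<And>\<alpha>. closedin X (F \<alpha>)" "\<And>\<alpha>. |F \<alpha>| =o |UNIV :: real set|" "\<And>\<alpha>. A \<subseteq> F \<alpha>"
proof -
  let ?R = "UNIV :: real set"
  have R_le_X: "|?R| \<le>o |topspace X|"
    using assms(3) ordLeq_total[OF card_of_Well_order card_of_Well_order] by blast
  then obtain D where D: "D \<subseteq> topspace X" "|D| =o |?R|" by (rule card_of_ordLeq_obtain_subset)
  obtain H where "\<And>B. B \<subseteq> topspace X \<Longrightarrow> |B| \<le>o |?R| \<Longrightarrow>
      closedin X (H B) \<and> B \<subseteq> X interior_of H B \<and> |H B| \<le>o |?R|"
    using exists_closed_small_neighbourhood[OF assms(1,2) R_le_X] by metis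
  moreover have "A \<union> D \<subseteq> topspace X" using assms(6) D(1) by blast
  moreover have "|A \<union> D| \<le>o |?R|"
    using card_of_Un_ordLeq_infinite[OF infinite_UNIV_char_0 assms(7)] D(2) ordIso_iff_ordLeq by blast
  ultimately obtain F where F: "interior_chain X \<kappa> F"
      "\<And>\<alpha>. closedin X (F \<alpha>)" "\<And>\<alpha>. |F \<alpha>| \<le>o |?R|" "\<And>\<alpha>. A \<union> D \<subseteq> F \<alpha>"
    using exists_closed_interior_chain[OF assms(4,5) infinite_UNIV_char_0 _ assms(3)] by metis
  have "|F \<alpha>| =o |?R|" for \<alpha>
  proof -
    have "|D| \<le>o |F \<alpha>|" using F(4) by (intro card_of_mono1) blast
    then have "|?R| \<le>o |F \<alpha>|" using D(2) ordIso_iff_ordLeq ordLeq_transitive by blast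
    with F(3) show ?thesis by (simp add: ordIso_iff_ordLeq)
  qed
  with F that show thesis by blast
qed

theorem theorem4p2:
  fixes X :: "'a topology" and \<kappa> :: "'k rel"
  assumes "locally_c X" and "c_fair X"
    and "Card_order \<kappa>" and "Cinfinite \<kappa>" and "regularCard \<kappa>"
    and "(\<kappa>, card_of (UNIV :: real set)) \<in> ordLeq"
    and "\<forall>F. (\<forall>\<alpha> \<in> Field \<kappa>. closedin X (F \<alpha>)) \<and> strongly_increasing X \<kappa> F
           \<longrightarrow> closedin X (\<Union>\<alpha> \<in> Field \<kappa>. F \<alpha>)"
    and "\<not> topspace X \<lesssim> (UNIV :: real set)"
  shows "\<forall>A. A \<subseteq> topspace X \<and> A \<lesssim> (UNIV :: real set) \<longrightarrow>
           (\<exists>U. openin X U \<and> closedin X U \<and> A \<subseteq> U \<and> U \<approx> (UNIV :: real set)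
                \<and> lindelof_number_ge X U \<kappa>)"
proof (intro allI impI)
  let ?R = "UNIV :: real set"
  fix A assume A: "A \<subseteq> topspace X \<and> A \<lesssim> ?R"
  have kappa_le: "|Field \<kappa>| \<le>o |?R|"
    using card_of_Field_ordIso[OF assms(3)] assms(6) by (rule ordIso_ordLeq_trans)
  obtain F where F: "interior_chain X \<kappa> F"
      "\<And>\<alpha>. closedin X (F \<alpha>)" "\<And>\<alpha>. |F \<alpha>| =o |?R|" "\<And>\<alpha>. A \<subseteq> F \<alpha>"
    using exists_closed_interior_chain_card_of_continuum[OF assms(1,2) _ Card_order_wo_rel[OF assms(3)] kappa_le]
      assms(8) A unfolding lepoll_iff_card_of_ordLeq by metis
  define U where "U = (\<Union>\<alpha> \<in> Field \<kappa>. F \<alpha>)"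
  have si: "strongly_increasing X \<kappa> F" by (rule interior_chain_strongly_increasing[OF assms(3,4) F(1)])
  obtain \<alpha> where "\<alpha> \<in> Field \<kappa>" using assms(4) unfolding cinfinite_def by fastforce
  then have "F \<alpha> \<subseteq> U" unfolding U_def by (rule UN_upper)
  then have "|?R| \<le>o |U|" using F(3)[of \<alpha>] ordIso_iff_ordLeq ordLeq_transitive card_of_mono1 by metis
  moreover have "|U| \<le>o |?R|" unfolding U_def
    using card_of_UNION_ordLeq_infinite[OF infinite_UNIV_char_0 kappa_le] F(3) ordIso_iff_ordLeq by blast
  ultimately have "U \<approx> ?R" unfolding eqpoll_iff_card_of_ordIso ordIso_iff_ordLeq by blast
  moreover have "A \<subseteq> U" using F(4) \<open>F \<alpha> \<subseteq> U\<close> by blast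
  moreover have "openin X U" unfolding U_def by (rule openin_Union_strongly_increasing[OF assms(3,4) si])
  moreover have "closedin X U" unfolding U_def using assms(7) si F(2) by blast
  moreover have "lindelof_number_ge X U \<kappa>"
    unfolding U_def by (rule lindelof_number_ge_Union_interior_chain[OF assms(3,4,5) F(1)])
  ultimately show "\<exists>U. openin X U \<and> closedin X U \<and> A \<subseteq> U \<and> U \<approx> ?R \<and> lindelof_number_ge X U \<kappa>"
    by blast
qed

end
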